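(* Let $Q\in\mathbb{R}^{n\times n}$ be symmetric positive definite, $A\in\mathbb{R}^{m\times n}$, $b\in\mathbb{R}^m$, $c\in\mathbb{R}^n$, and suppose the problem $P(Q,A,b,c)$: $\min_{x\in\mathbb{R}^n}\frac12 x^\intercal Qx+c^\intercal x$ s.t. $Ax\preceq b$ is feasible, with optimal solution $x^\ast$. Let $\mu^\ast$ be an optimal solution of the dual problem $\max_{\mu\succeq 0} g(\mu)$, where $g(\mu)=-\frac12(A^\intercal\mu+c)^\intercal Q^{-1}(A^\intercal\mu+c)-\mu^\intercal b$, and let $t:=\operatorname{sign}(\mu^\ast+\nabla g(\mu^\ast))\in\{+1,-1,0\}^m$ (componentwise), where $\nabla g(\mu)=-AQ^{-1}(A^\intercal\mu+c)-b$. Suppose an adversary (the target node) knows $A$, $x^\ast$ and $t$. Then $b$ cannot be uniquely retrieved by the adversary — i.e., there exist $b'\in\mathbb{R}^m$ with $b'\neq b$, a symmetric positive definite $Q'\in\mathbb{R}^{n\times n}$, $c'\in\mathbb{R}^n$, and an optimal solution $\mu'$ of the dual of $P(Q',A,b',c')$ (dual function $g'$ defined as $g$ with $Q',b',c'$ in place of $Q,b,c$) such that $x^\ast$ is the optimal solution of $P(Q',A,b',c')$ and $\operatorname{sign}(\mu'+\nabla g'(\mu'))=t$ — if and only if $t_i<0$ for some $i\in\{1,\dots,m\}$.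
   Context: Vector inequalities $\preceq,\succeq$ are element-wise. The paper's notion of non-unique retrieval: a private input cannot be uniquely retrieved by an adversary if there are at least two values of it, each consistent (together with some values of the other data unknown to the adversary) with everything the adversary knows; the claim makes this explicit for the knowledge $(A,x^\ast,t)$. *)

theory Defs
  imports "HOL-Analysis.Analysis"
begin

definition sym_pos_def :: "real^'n^'n \<Rightarrow> bool" where
  "sym_pos_def Q \<longleftrightarrow> transpose Q = Q \<and> (\<forall>x. x \<noteq> 0 \<longrightarrow> x \<bullet> (Q *v x) > 0)"

definition qp_obj :: "real^'n^'n \<Rightarrow> real^'n \<Rightarrow> real^'n \<Rightarrow> real" where
  "qp_obj Q c x = (1/2) * (x \<bullet> (Q *v x)) + c \<bullet> x"

definition qp_feasible :: "real^'n^'m \<Rightarrow> real^'m \<Rightarrow> real^'n \<Rightarrow> bool" where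
  "qp_feasible A b x \<longleftrightarrow> (\<forall>i. (A *v x) $ i \<le> b $ i)"

definition qp_primal_opt :: "real^'n^'n \<Rightarrow> real^'n^'m \<Rightarrow> real^'m \<Rightarrow> real^'n \<Rightarrow> real^'n \<Rightarrow> bool" where
  "qp_primal_opt Q A b c x \<longleftrightarrow> qp_feasible A b x \<and>
     (\<forall>y. qp_feasible A b y \<longrightarrow> qp_obj Q c x \<le> qp_obj Q c y)"

definition qp_dual :: "real^'n^'n \<Rightarrow> real^'n^'m \<Rightarrow> real^'m \<Rightarrow> real^'n \<Rightarrow> real^'m \<Rightarrow> real" where
  "qp_dual Q A b c \<mu> =
     - (1/2) * ((transpose A *v \<mu> + c) \<bullet> (matrix_inv Q *v (transpose A *v \<mu> + c))) - \<mu> \<bullet> b"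

definition qp_dual_grad :: "real^'n^'n \<Rightarrow> real^'n^'m \<Rightarrow> real^'m \<Rightarrow> real^'n \<Rightarrow> real^'m \<Rightarrow> real^'m" where
  "qp_dual_grad Q A b c \<mu> = - ((A ** matrix_inv Q) *v (transpose A *v \<mu> + c)) - b"

definition qp_dual_opt :: "real^'n^'n \<Rightarrow> real^'n^'m \<Rightarrow> real^'m \<Rightarrow> real^'n \<Rightarrow> real^'m \<Rightarrow> bool" where
  "qp_dual_opt Q A b c \<mu> \<longleftrightarrow> (\<forall>i. 0 \<le> \<mu> $ i) \<and>
     (\<forall>\<nu>. (\<forall>i. 0 \<le> \<nu> $ i) \<longrightarrow> qp_dual Q A b c \<nu> \<le> qp_dual Q A b c \<mu>)"

definition vsign :: "real^'m \<Rightarrow> real^'m" where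
  "vsign v = (\<chi> i. sgn (v $ i))"

end

(* At a dual optimum mu, the Lagrangian minimiser -Q^-1 (A^T mu + c) satisfies the KKT conditions
   together with mu, so by strict convexity it is the primal optimum x, and the dual gradient is the
   residual A x - b.  Dual optimality over mu >= 0 means grad g <= 0 with mu_i * (grad g)_i = 0,
   hence t_i >= 0 exactly when constraint i is active.  If no t_i is negative, every constraint is
   active and b = A x is determined by (A, x, t).  If t_j < 0, take Q' = I, mu' the indicator of
   {t > 0}, c' = -(x + A^T mu') and b' = A x + s with a slack s >= 0 supported on {t < 0} and s_j so
   large that b'_j differs from b_j: then x and mu' satisfy the KKT conditions of P(I, A, b', c')
   and reproduce the sign pattern t. *)

theory Submission
  imports Defs
begin

lemma sym_pos_def_matrix_inv:
  fixes Q :: "real^'n^'n"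
  assumes "sym_pos_def Q"
  shows "Q ** matrix_inv Q = mat 1" "matrix_inv Q ** Q = mat 1"
    and "transpose (matrix_inv Q) = matrix_inv Q"
proof -
  have "Q *v x = 0 \<Longrightarrow> x = 0" for x
    using assms unfolding sym_pos_def_def by force
  then have "invertible Q"
    using matrix_left_invertible_ker invertible_left_inverse by blast
  then have inv: "Q ** matrix_inv Q = mat 1 \<and> matrix_inv Q ** Q = mat 1"
    unfolding invertible_def matrix_inv_def by (rule someI_ex)
  then show "Q ** matrix_inv Q = mat 1" "matrix_inv Q ** Q = mat 1" by auto
  have "transpose (matrix_inv Q) ** Q = mat 1"
    using assms inv unfolding sym_pos_def_def by (metis matrix_transpose_mul transpose_mat)
  then show "transpose (matrix_inv Q) = matrix_inv Q"
    by (metis inv matrix_mul_assoc matrix_mul_lid matrix_mul_rid)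
qed

lemma sym_pos_def_mat_1: "sym_pos_def (mat 1 :: real^'n^'n)"
  unfolding sym_pos_def_def by simp

lemma matrix_inv_mat_1: "matrix_inv (mat 1 :: real^'n^'n) = mat 1"
  using sym_pos_def_matrix_inv(1)[OF sym_pos_def_mat_1] by simp

lemma sym_pos_def_matrix_inv_nonneg:
  fixes Q :: "real^'n^'n"
  assumes "sym_pos_def Q"
  shows "0 \<le> v \<bullet> (matrix_inv Q *v v)"
proof -
  define w where "w = matrix_inv Q *v v"
  have "v = Q *v w"
    unfolding w_def by (simp add: matrix_vector_mul_assoc sym_pos_def_matrix_inv[OF assms])
  then have "v \<bullet> (matrix_inv Q *v v) = w \<bullet> (Q *v w)"
    unfolding w_def by (simp add: inner_commute)
  also have "\<dots> \<ge> 0"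
    using assms unfolding sym_pos_def_def by (cases "w = 0") auto
  finally show ?thesis .
qed

lemma inner_symmetric_matrix_commute:
  fixes M :: "real^'n^'n"
  assumes "transpose M = M"
  shows "u \<bullet> (M *v w) = w \<bullet> (M *v u)"
  by (metis assms dot_lmul_matrix inner_commute vector_transpose_matrix)

lemma inner_matrix_vector_transpose:
  fixes A :: "real^'n^'m"
  shows "(A *v v) \<bullet> d = v \<bullet> (transpose A *v d)"
  by (metis dot_lmul_matrix inner_commute transpose_matrix_vector)

lemma matrix_vector_mult_uminus: "(A::real^'n^'m) *v (- v) = - (A *v v)"
  by (metis diff_0 matrix_vector_mult_0_right matrix_vector_mult_diff_distrib)

lemma qp_dual_add_scaled:
  fixes Q :: "real^'n^'n" and A :: "real^'n^'m"
  assumes "transpose (matrix_inv Q) = matrix_inv Q"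
  shows "qp_dual Q A b c (\<mu> + s *\<^sub>R d) = qp_dual Q A b c \<mu> + s * (qp_dual_grad Q A b c \<mu> \<bullet> d)
     - s\<^sup>2 / 2 * ((transpose A *v d) \<bullet> (matrix_inv Q *v (transpose A *v d)))"
proof -
  define M where "M = matrix_inv Q"
  define w where "w = transpose A *v \<mu> + c"
  define u where "u = transpose A *v d"
  have shift: "transpose A *v (\<mu> + s *\<^sub>R d) + c = w + s *\<^sub>R u"
    unfolding w_def u_def by (simp add: algebra_simps)
  have sym: "w \<bullet> (M *v u) = u \<bullet> (M *v w)"
    using inner_symmetric_matrix_commute assms M_def by metis
  have "qp_dual_grad Q A b c \<mu> \<bullet> d = - ((A *v (M *v w)) \<bullet> d) - b \<bullet> d"
    unfolding qp_dual_grad_def M_def[symmetric] w_def[symmetric]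
    by (simp add: inner_diff_left matrix_vector_mul_assoc[symmetric])
  also have "(A *v (M *v w)) \<bullet> d = u \<bullet> (M *v w)"
    unfolding u_def by (subst inner_matrix_vector_transpose) (simp only: inner_commute)
  finally have grad: "qp_dual_grad Q A b c \<mu> \<bullet> d = - (u \<bullet> (M *v w)) - b \<bullet> d" .
  show ?thesis
    unfolding qp_dual_def M_def[symmetric] shift w_def[symmetric] grad u_def[symmetric]
    using sym
    by (simp add: algebra_simps inner_add_left inner_add_right power2_eq_square inner_commute)
qed

lemma nonpos_if_linear_le_quadratic:
  fixes a K \<epsilon> :: real
  assumes "0 < \<epsilon>" and "\<And>s. 0 < s \<Longrightarrow> s \<le> \<epsilon> \<Longrightarrow> s * a \<le> s\<^sup>2 * K"
  shows "a \<le> 0"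
proof (rule ccontr)
  assume "\<not> a \<le> 0"
  define s where "s = min \<epsilon> (a / (\<bar>K\<bar> + 1))"
  have "0 < s" using \<open>\<not> a \<le> 0\<close> assms(1) unfolding s_def by simp
  have "s \<le> a / (\<bar>K\<bar> + 1)" unfolding s_def by simp
  then have "s * (\<bar>K\<bar> + 1) \<le> a" by (simp add: pos_le_divide_eq)
  moreover have "s * K \<le> s * \<bar>K\<bar>" using \<open>0 < s\<close> by (intro mult_left_mono) auto
  moreover have "s * (\<bar>K\<bar> + 1) = s * \<bar>K\<bar> + s" by (simp add: algebra_simps)
  ultimately have "s * K < a" using \<open>0 < s\<close> by linarith
  moreover have "s * a \<le> s * (s * K)"
    using assms(2)[OF \<open>0 < s\<close>] unfolding s_def by (simp add: power2_eq_square)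
  ultimately show False using \<open>0 < s\<close> by simp
qed

lemma qp_dual_opt_imp_complementary:
  fixes Q :: "real^'n^'n" and A :: "real^'n^'m"
  assumes "transpose (matrix_inv Q) = matrix_inv Q" and opt: "qp_dual_opt Q A b c \<mu>"
  shows "0 \<le> \<mu> $ i \<and> qp_dual_grad Q A b c \<mu> $ i \<le> 0 \<and> \<mu> $ i * qp_dual_grad Q A b c \<mu> $ i = 0"
proof -
  define g where "g = qp_dual_grad Q A b c \<mu>"
  define K where "K = (transpose A *v axis i 1) \<bullet> (matrix_inv Q *v (transpose A *v axis i 1)) / 2"
  have \<mu>_nonneg: "0 \<le> \<mu> $ j" for j using opt by (simp add: qp_dual_opt_def)
  \<comment> \<open>On the admissible ray \<open>\<mu> + s e\<^sub>i\<close>, \<open>s \<ge> - \<mu>\<^sub>i\<close>, the dual objective is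
    a concave parabola with slope \<open>g\<^sub>i\<close> at \<open>s = 0\<close>.\<close>
  have step: "s * g $ i \<le> s\<^sup>2 * K" if "0 \<le> \<mu> $ i + s" for s
  proof -
    have "\<forall>j. 0 \<le> (\<mu> + s *\<^sub>R axis i 1) $ j" using \<mu>_nonneg that by (auto simp: axis_def)
    then have "qp_dual Q A b c (\<mu> + s *\<^sub>R axis i 1) \<le> qp_dual Q A b c \<mu>"
      using opt by (simp add: qp_dual_opt_def)
    then show ?thesis
      using qp_dual_add_scaled[OF assms(1), of A b c \<mu> s "axis i 1"] by (simp add: g_def K_def inner_axis)
  qed
  have "g $ i \<le> 0"
    by (rule nonpos_if_linear_le_quadratic[of 1 _ K]) (use step \<mu>_nonneg[of i] in auto)
  moreover have "- g $ i \<le> 0" if "0 < \<mu> $ i"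
  proof (rule nonpos_if_linear_le_quadratic[OF that])
    fix s assume "0 < s" "s \<le> \<mu> $ i"
    then show "s * - g $ i \<le> s\<^sup>2 * K" using step[of "- s"] by simp
  qed
  ultimately show ?thesis
    using \<mu>_nonneg[of i] unfolding g_def by (cases "0 < \<mu> $ i") auto
qed

lemma qp_dual_opt_iff:
  fixes Q :: "real^'n^'n" and A :: "real^'n^'m"
  assumes "sym_pos_def Q"
  shows "qp_dual_opt Q A b c \<mu> \<longleftrightarrow> (\<forall>i. 0 \<le> \<mu> $ i \<and> qp_dual_grad Q A b c \<mu> $ i \<le> 0
           \<and> \<mu> $ i * qp_dual_grad Q A b c \<mu> $ i = 0)"
    (is "_ \<longleftrightarrow> (\<forall>i. ?complementary i)")
proof
  note sym = sym_pos_def_matrix_inv(3)[OF assms]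
  show "\<forall>i. ?complementary i" if "qp_dual_opt Q A b c \<mu>"
    using qp_dual_opt_imp_complementary[OF sym that] by blast
  define g where "g = qp_dual_grad Q A b c \<mu>"
  assume complementary: "\<forall>i. ?complementary i"
  show "qp_dual_opt Q A b c \<mu>"
    unfolding qp_dual_opt_def
  proof (intro conjI allI impI)
    fix \<nu> :: "real^'m" assume "\<forall>i. 0 \<le> \<nu> $ i"
    then have "g \<bullet> \<nu> \<le> 0"
      using complementary unfolding g_def inner_vec_def inner_real_def
      by (intro sum_nonpos) (simp add: mult_nonpos_nonneg)
    moreover have "g \<bullet> \<mu> = 0"
      using complementary unfolding g_def inner_vec_def inner_real_def
      by (intro sum.neutral) (simp add: mult.commute)
    moreover have "0 \<le> (transpose A *v (\<nu> - \<mu>)) \<bullet> (matrix_inv Q *v (transpose A *v (\<nu> - \<mu>)))"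
      by (rule sym_pos_def_matrix_inv_nonneg[OF assms])
    ultimately show "qp_dual Q A b c \<nu> \<le> qp_dual Q A b c \<mu>"
      using qp_dual_add_scaled[OF sym, of A b c \<mu> 1 "\<nu> - \<mu>"] by (simp add: g_def inner_diff_right)
  qed (use complementary in auto)
qed

definition qp_kkt :: "real^'n^'n \<Rightarrow> real^'n^'m \<Rightarrow> real^'m \<Rightarrow> real^'n \<Rightarrow> real^'n \<Rightarrow> real^'m \<Rightarrow> bool" where
  "qp_kkt Q A b c x \<mu> \<longleftrightarrow> Q *v x + c = - (transpose A *v \<mu>) \<and> qp_feasible A b x
     \<and> (\<forall>i. 0 \<le> \<mu> $ i) \<and> (A *v x - b) \<bullet> \<mu> = 0"

lemma qp_kkt_obj_gap:
  fixes Q :: "real^'n^'n" and A :: "real^'n^'m"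
  assumes "transpose Q = Q" and "qp_kkt Q A b c x \<mu>" and "qp_feasible A b y"
  shows "qp_obj Q c x + (y - x) \<bullet> (Q *v (y - x)) / 2 \<le> qp_obj Q c y"
proof -
  define d where "d = y - x"
  have y: "y = x + d" unfolding d_def by simp
  have "x \<bullet> (Q *v d) = d \<bullet> (Q *v x)"
    using inner_symmetric_matrix_commute[OF assms(1)] by metis
  then have obj: "qp_obj Q c y = qp_obj Q c x + d \<bullet> (Q *v x + c) + d \<bullet> (Q *v d) / 2"
    unfolding qp_obj_def y by (simp add: algebra_simps inner_add_left inner_add_right inner_commute)
  have "d \<bullet> (Q *v x + c) = - ((A *v d) \<bullet> \<mu>)"
    using assms(2) unfolding qp_kkt_def
    by (simp add: inner_matrix_vector_transpose inner_minus_right)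
  also have "A *v d = (A *v y - b) - (A *v x - b)"
    unfolding d_def by (simp add: matrix_vector_mult_diff_distrib)
  finally have "d \<bullet> (Q *v x + c) = - ((A *v y - b) \<bullet> \<mu>)"
    using assms(2) unfolding qp_kkt_def by (simp add: inner_diff_left)
  moreover have "(A *v y - b) \<bullet> \<mu> \<le> 0"
    using assms(2,3) unfolding qp_kkt_def qp_feasible_def inner_vec_def inner_real_def
    by (intro sum_nonpos) (simp add: mult_nonpos_nonneg)
  ultimately show ?thesis using obj unfolding d_def by linarith
qed

lemma qp_kkt_imp_primal_opt:
  fixes Q :: "real^'n^'n" and A :: "real^'n^'m"
  assumes "transpose Q = Q" and "\<And>z. 0 \<le> z \<bullet> (Q *v z)" and "qp_kkt Q A b c x \<mu>"
  shows "qp_primal_opt Q A b c x"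
  unfolding qp_primal_opt_def
proof (intro conjI allI impI)
  show "qp_feasible A b x" using assms(3) unfolding qp_kkt_def by blast
  fix y assume "qp_feasible A b y"
  then show "qp_obj Q c x \<le> qp_obj Q c y"
    using qp_kkt_obj_gap[OF assms(1,3)] assms(2)[of "y - x"] by force
qed

lemma qp_primal_opt_eq_kkt_point:
  fixes Q :: "real^'n^'n" and A :: "real^'n^'m"
  assumes "sym_pos_def Q" and "qp_kkt Q A b c x\<^sub>0 \<mu>" and "qp_primal_opt Q A b c x"
  shows "x = x\<^sub>0"
proof (rule ccontr)
  assume "x \<noteq> x\<^sub>0"
  then have "0 < (x - x\<^sub>0) \<bullet> (Q *v (x - x\<^sub>0))"
    using assms(1) unfolding sym_pos_def_def by simp
  moreover have "qp_obj Q c x\<^sub>0 + (x - x\<^sub>0) \<bullet> (Q *v (x - x\<^sub>0)) / 2 \<le> qp_obj Q c x"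
    using assms qp_kkt_obj_gap unfolding sym_pos_def_def qp_primal_opt_def by blast
  moreover have "qp_obj Q c x \<le> qp_obj Q c x\<^sub>0"
    using assms(2,3) unfolding qp_kkt_def qp_primal_opt_def by blast
  ultimately show False by linarith
qed

definition qp_lagrangian_argmin :: "real^'n^'n \<Rightarrow> real^'n^'m \<Rightarrow> real^'n \<Rightarrow> real^'m \<Rightarrow> real^'n" where
  "qp_lagrangian_argmin Q A c \<mu> = - (matrix_inv Q *v (transpose A *v \<mu> + c))"

lemma qp_dual_grad_eq_lagrangian_argmin:
  "qp_dual_grad Q A b c \<mu> = A *v qp_lagrangian_argmin Q A c \<mu> - b"
  unfolding qp_dual_grad_def qp_lagrangian_argmin_def
  by (simp add: matrix_vector_mul_assoc[symmetric] matrix_vector_mult_uminus)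

lemma qp_dual_opt_imp_kkt:
  fixes Q :: "real^'n^'n" and A :: "real^'n^'m"
  assumes "sym_pos_def Q" and "qp_dual_opt Q A b c \<mu>"
  shows "qp_kkt Q A b c (qp_lagrangian_argmin Q A c \<mu>) \<mu>"
proof -
  define x where "x = qp_lagrangian_argmin Q A c \<mu>"
  have "Q *v x = - (transpose A *v \<mu> + c)"
    unfolding x_def qp_lagrangian_argmin_def
    by (simp add: matrix_vector_mul_assoc matrix_vector_mult_uminus sym_pos_def_matrix_inv[OF assms(1)])
  moreover have complementary: "\<forall>i. 0 \<le> \<mu> $ i \<and> (A *v x - b) $ i \<le> 0 \<and> \<mu> $ i * (A *v x - b) $ i = 0"
    using assms qp_dual_opt_iff qp_dual_grad_eq_lagrangian_argmin x_def by metis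
  moreover have "(A *v x - b) \<bullet> \<mu> = 0"
    using complementary unfolding inner_vec_def inner_real_def
    by (intro sum.neutral) (simp add: mult.commute)
  ultimately show ?thesis
    unfolding qp_kkt_def qp_feasible_def x_def[symmetric] by simp
qed

lemma qp_dual_grad_eq_residual:
  fixes Q :: "real^'n^'n" and A :: "real^'n^'m"
  assumes "sym_pos_def Q" and "qp_primal_opt Q A b c x" and "qp_dual_opt Q A b c \<mu>"
  shows "qp_dual_grad Q A b c \<mu> = A *v x - b"
  using qp_primal_opt_eq_kkt_point[OF assms(1) qp_dual_opt_imp_kkt[OF assms(1,3)] assms(2)]
  by (simp add: qp_dual_grad_eq_lagrangian_argmin)

lemma qp_rhs_eq_if_sign_nonneg:
  fixes Q :: "real^'n^'n" and A :: "real^'n^'m"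
  assumes "sym_pos_def Q" and "qp_primal_opt Q A b c x" and "qp_dual_opt Q A b c \<mu>"
    and "\<And>i. 0 \<le> (\<mu> + qp_dual_grad Q A b c \<mu>) $ i"
  shows "b = A *v x"
proof -
  have "qp_dual_grad Q A b c \<mu> $ i = 0" for i
  proof -
    have "0 \<le> \<mu> $ i" "qp_dual_grad Q A b c \<mu> $ i \<le> 0" "\<mu> $ i * qp_dual_grad Q A b c \<mu> $ i = 0"
      using qp_dual_opt_imp_complementary[OF sym_pos_def_matrix_inv(3)[OF assms(1)] assms(3)] by blast+
    then show ?thesis using assms(4)[of i] by auto
  qed
  then show ?thesis
    using qp_dual_grad_eq_residual[OF assms(1-3)] by (simp add: vec_eq_iff)
qed

lemma exists_other_rhs_with_sign_pattern:
  fixes A :: "real^'n^'m" and x :: "real^'n" and b t :: "real^'m"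
  assumes "\<And>i. t $ i \<in> {-1, 0, 1}" and "t $ j < 0"
  shows "\<exists>b' c' \<mu>'. b' \<noteq> b \<and> qp_dual_opt (mat 1) A b' c' \<mu>' \<and> qp_primal_opt (mat 1) A b' c' x
           \<and> vsign (\<mu>' + qp_dual_grad (mat 1) A b' c' \<mu>') = t"
proof -
  define slack :: "real^'m" where
    "slack = (\<chi> i. if t $ i < 0 then \<bar>b $ j - (A *v x) $ j\<bar> + 1 else 0)"
  define \<mu>' :: "real^'m" where "\<mu>' = (\<chi> i. if 0 < t $ i then 1 else 0)"
  define b' where "b' = A *v x + slack"
  define c' where "c' = - (x + transpose A *v \<mu>')"
  have "b' $ j \<noteq> b $ j"
    unfolding b'_def slack_def using assms(2) by auto
  then have "b' \<noteq> b" by blast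
  have grad: "qp_dual_grad (mat 1) A b' c' \<mu>' = - slack"
    unfolding qp_dual_grad_def matrix_inv_mat_1 c'_def b'_def by (simp add: matrix_vector_mult_uminus)
  have "qp_dual_opt (mat 1) A b' c' \<mu>'"
    unfolding qp_dual_opt_iff[OF sym_pos_def_mat_1] grad by (simp add: slack_def \<mu>'_def)
  moreover have "qp_primal_opt (mat 1) A b' c' x"
  proof (rule qp_kkt_imp_primal_opt)
    have "slack \<bullet> \<mu>' = 0"
      unfolding inner_vec_def inner_real_def slack_def \<mu>'_def by (intro sum.neutral) auto
    then show "qp_kkt (mat 1) A b' c' x \<mu>'"
      unfolding qp_kkt_def qp_feasible_def b'_def c'_def slack_def \<mu>'_def by simp
  qed auto
  moreover have "vsign (\<mu>' + qp_dual_grad (mat 1) A b' c' \<mu>') = t"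
  proof -
    have "sgn ((\<mu>' - slack) $ i) = t $ i" for i
      using assms(1)[of i] by (auto simp: \<mu>'_def slack_def sgn_if)
    then show ?thesis by (simp add: grad vsign_def vec_eq_iff)
  qed
  ultimately show ?thesis using \<open>b' \<noteq> b\<close> by blast
qed

theorem proposition5:
  fixes Q :: "real^'n^'n" and A :: "real^'n^'m" and b :: "real^'m" and c :: "real^'n"
    and xs :: "real^'n" and \<mu>s :: "real^'m" and t :: "real^'m"
  assumes "sym_pos_def Q"
    and "\<exists>x. qp_feasible A b x"
    and "qp_primal_opt Q A b c xs"
    and "qp_dual_opt Q A b c \<mu>s"
    and "t = vsign (\<mu>s + qp_dual_grad Q A b c \<mu>s)"
  shows "(\<exists>b' Q' c' \<mu>'. b' \<noteq> b \<and> sym_pos_def Q' \<and> qp_dual_opt Q' A b' c' \<mu>'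
            \<and> qp_primal_opt Q' A b' c' xs
            \<and> vsign (\<mu>' + qp_dual_grad Q' A b' c' \<mu>') = t)
         \<longleftrightarrow> (\<exists>i. t $ i < 0)"
proof
  assume "\<exists>b' Q' c' \<mu>'. b' \<noteq> b \<and> sym_pos_def Q' \<and> qp_dual_opt Q' A b' c' \<mu>'
            \<and> qp_primal_opt Q' A b' c' xs \<and> vsign (\<mu>' + qp_dual_grad Q' A b' c' \<mu>') = t"
  then obtain b' Q' c' \<mu>' where "b' \<noteq> b" and Q': "sym_pos_def Q'"
    and opt': "qp_primal_opt Q' A b' c' xs" "qp_dual_opt Q' A b' c' \<mu>'"
    and t': "t = vsign (\<mu>' + qp_dual_grad Q' A b' c' \<mu>')"
    by metis
  show "\<exists>i. t $ i < 0"
  proof (rule ccontr)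
    assume t_nonneg: "\<not> (\<exists>i. t $ i < 0)"
    then have "0 \<le> (\<mu>s + qp_dual_grad Q A b c \<mu>s) $ i" for i
      using assms(5) by (auto simp: vsign_def not_less)
    with assms(1,3,4) have "b = A *v xs" by (rule qp_rhs_eq_if_sign_nonneg)
    moreover from t_nonneg have "0 \<le> (\<mu>' + qp_dual_grad Q' A b' c' \<mu>') $ i" for i
      using t' by (auto simp: vsign_def not_less)
    with Q' opt' have "b' = A *v xs" by (rule qp_rhs_eq_if_sign_nonneg)
    ultimately show False using \<open>b' \<noteq> b\<close> by simp
  qed
next
  assume "\<exists>i. t $ i < 0"
  moreover have "t $ i \<in> {-1, 0, 1}" for i
    using assms(5) by (simp add: vsign_def sgn_if)
  ultimately show "\<exists>b' Q' c' \<mu>'. b' \<noteq> b \<and> sym_pos_def Q' \<and> qp_dual_opt Q' A b' c' \<mu>'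
            \<and> qp_primal_opt Q' A b' c' xs \<and> vsign (\<mu>' + qp_dual_grad Q' A b' c' \<mu>') = t"
    using exists_other_rhs_with_sign_pattern sym_pos_def_mat_1 by metis
qed

end
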